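(* Let $(X,d)$ and $(\Lambda,d_\Lambda)$ be compact metric spaces and $\tau:\Lambda\times X\to X$ continuous. For each $n\in\mathbb N$ let $q^{(n)}:X\to\mathcal P(\Lambda)$ be continuous, and suppose that there are constants $s>0$, $r\ge0$, $t\ge 0$ with $s+rt<1$ such that for every $n$: (M1) $\int_\Lambda |f(\tau(\lambda,x))-f(\tau(\lambda,y))|\,dq^{(n)}_x(\lambda)\le s\,d(x,y)$ for all $x,y\in X$ and all $f\in\mathrm{Lip}_1(X)$; (H2) $d(\tau(\lambda_1,x),\tau(\lambda_2,x))\le r\,d_\Lambda(\lambda_1,\lambda_2)$ for all $\lambda_1,\lambda_2\in\Lambda$, $x\in X$; (H3) $d_{MK}(q^{(n)}_x,q^{(n)}_y)\le t\,d(x,y)$ for all $x,y\in X$. Let $\mu^{(n)}$ be the unique $T_{q^{(n)}}$-invariant probability. Assume that there is a family $q^*=(q^*_x)_{x\in X}\subseteq\mathcal P(\Lambda)$ such that $q^{(n)}_x\to q^*_x$ in $d_{MK}$ uniformly in $x\in X$ (for every $\varepsilon>0$ there is $N$ with $d_{MK}(q^{(n)}_x,q^*_x)<\varepsilon$ for all $n\ge N$ and all $x\in X$). Then there exists a unique probability $\mu^*\in\mathcal P(X)$ invariant for the IFS with measures $(X,\tau,q^* )$, i.e. $T_{q^*}(\mu^* )=\mu^*$, and $\mu^{(n)}\to\mu^*$ in $d_{MK}$ on $\mathcal P(X)$.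
   Context: $\mathcal{P}(Y)$ is the set of Borel probability measures on a compact metric space $Y$, with $d_{MK}(\mu,\nu)=\sup_{f\in \mathrm{Lip}_1(Y)}\{\int f\,d\mu-\int f\,d\nu\}$, $\mathrm{Lip}_1(Y)$ being the real $1$-Lipschitz functions on $Y$. For a family $p=(p_x)_{x\in X}\subseteq\mathcal P(\Lambda)$, the transfer operator is $B_p(f)(x)=\int_\Lambda f(\tau(\lambda,x))\,dp_x(\lambda)$ and the Markov operator $T_p$ on $\mathcal P(X)$ is defined by $\int f\,dT_p(\mu)=\int B_p(f)\,d\mu$ for $f\in C(X)$; $\mu$ is invariant if $T_p(\mu)=\mu$. *)

theory Defs
  imports "HOL-Probability.Probability"
begin

definition lip1 :: "('a::metric_space \<Rightarrow> real) \<Rightarrow> bool" where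
  "lip1 f \<longleftrightarrow> (\<forall>x y. \<bar>f x - f y\<bar> \<le> dist x y)"

definition probs :: "'a::topological_space measure set" where
  "probs = {M. prob_space M \<and> sets M = sets borel}"

definition dMK :: "'a::metric_space measure \<Rightarrow> 'a measure \<Rightarrow> real" where
  "dMK \<mu> \<nu> = (SUP f\<in>{f. lip1 f}. (\<integral>x. f x \<partial>\<mu>) - (\<integral>x. f x \<partial>\<nu>))"

definition transfer :: "('l \<Rightarrow> 'x \<Rightarrow> 'x) \<Rightarrow> ('x \<Rightarrow> 'l measure) \<Rightarrow> ('x \<Rightarrow> real) \<Rightarrow> 'x \<Rightarrow> real" where
  "transfer \<tau> p f x = (\<integral>l. f (\<tau> l x) \<partial>(p x))"

text \<open>mu is invariant for the Markov operator T_p: mu is a probability and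
  int f d(T_p mu) = int B_p f d mu equals int f d mu for all continuous f,
  i.e. T_p(mu) = mu.\<close>
definition invariant :: "('l \<Rightarrow> 'x::topological_space \<Rightarrow> 'x) \<Rightarrow> ('x \<Rightarrow> 'l measure) \<Rightarrow> 'x measure \<Rightarrow> bool" where
  "invariant \<tau> p \<mu> \<longleftrightarrow> \<mu> \<in> probs \<and>
     (\<forall>f::'x \<Rightarrow> real. continuous_on UNIV f \<longrightarrow> (\<integral>x. f x \<partial>\<mu>) = (\<integral>x. transfer \<tau> p f x \<partial>\<mu>))"

definition weak_continuous :: "('x::topological_space \<Rightarrow> 'l::topological_space measure) \<Rightarrow> bool" where
  "weak_continuous q \<longleftrightarrow> (\<forall>f::'l \<Rightarrow> real. continuous_on UNIV f \<longrightarrow>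
      continuous_on UNIV (\<lambda>x. \<integral>l. f l \<partial>(q x)))"

end

theory Submission
  imports Defs
begin

lemma lip1_iff_lipschitz_on: "lip1 f \<longleftrightarrow> 1-lipschitz_on UNIV f"
  by (simp add: lip1_def lipschitz_on_def dist_real_def)

lemma lip1_continuous_on: "lip1 f \<Longrightarrow> continuous_on UNIV f"
  by (simp add: lip1_iff_lipschitz_on lipschitz_on_continuous_on)

lemma lip1_const: "lip1 (\<lambda>x. c)"
  by (simp add: lip1_def)

lemma lip1_uminus: "lip1 f \<Longrightarrow> lip1 (\<lambda>x. - f x)"
  by (simp add: lip1_def abs_minus_commute)

lemma lip1_divide:
  assumes "C-lipschitz_on UNIV g" "C > 0"
  shows "lip1 (\<lambda>x. g x / C)"
  unfolding lip1_def
proof (intro allI)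
  fix x y
  have "\<bar>g x - g y\<bar> \<le> C * dist x y"
    using lipschitz_onD[OF assms(1)] by (simp add: dist_real_def)
  then show "\<bar>g x / C - g y / C\<bar> \<le> dist x y"
    using assms(2) by (simp add: diff_divide_distrib[symmetric] divide_le_eq mult.commute)
qed

lemma compact_space_bounded_real:
  fixes f :: "'a::topological_space \<Rightarrow> real"
  assumes "compact (UNIV::'a set)" "continuous_on UNIV f"
  obtains B where "\<And>x. \<bar>f x\<bar> \<le> B"
proof -
  have "bounded (range f)"
    by (rule compact_imp_bounded[OF compact_continuous_image[OF assms(2,1)]])
  then show ?thesis using that by (auto simp: bounded_real)
qed

lemma probs_prob_space: "M \<in> probs \<Longrightarrow> prob_space M"
  by (simp add: probs_def)

lemma sets_probs: "M \<in> probs \<Longrightarrow> sets M = sets borel"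
  by (simp add: probs_def)

lemma measurable_probsI: "M \<in> probs \<Longrightarrow> g \<in> measurable borel N \<Longrightarrow> g \<in> measurable M N"
  using measurable_cong_sets[OF sets_probs refl] by blast

lemma integral_probs_const: "M \<in> probs \<Longrightarrow> (\<integral>x. c \<partial>M) = (c::real)"
  by (simp add: prob_space.prob_space[OF probs_prob_space])

lemma integrable_probs_continuous:
  fixes f :: "'a::topological_space \<Rightarrow> real"
  assumes "compact (UNIV::'a set)" "M \<in> probs" "continuous_on UNIV f"
  shows "integrable M f"
proof -
  interpret prob_space M using probs_prob_space[OF assms(2)] .
  obtain B where "\<And>x. \<bar>f x\<bar> \<le> B" using compact_space_bounded_real[OF assms(1,3)] by blast
  then show ?thesis
    by (intro integrable_const_bound[where B=B] AE_I2 measurable_probsI[OF assms(2)]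
        borel_measurable_continuous_onI[OF assms(3)]) simp
qed

lemma integral_probs_diff_le:
  assumes "M \<in> probs" "integrable M g" "integrable M h" "\<And>x. \<bar>g x - h x\<bar> \<le> \<delta>"
  shows "\<bar>(\<integral>x. g x \<partial>M) - (\<integral>x. h x \<partial>M)\<bar> \<le> (\<delta>::real)"
proof -
  interpret prob_space M using probs_prob_space[OF assms(1)] .
  have "\<bar>(\<integral>x. g x \<partial>M) - (\<integral>x. h x \<partial>M)\<bar> \<le> (\<integral>x. \<bar>g x - h x\<bar> \<partial>M)"
    using integral_abs_bound[of M "\<lambda>x. g x - h x"] assms(2,3) by simp
  also have "\<dots> \<le> (\<integral>x. \<delta> \<partial>M)"
    using assms(2-4) by (intro integral_mono) auto
  finally show ?thesis by (simp add: prob_space)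
qed

lemma dMK_bdd_above:
  assumes "compact (UNIV::'a::metric_space set)" "\<mu> \<in> probs" "\<nu> \<in> probs"
  shows "bdd_above ((\<lambda>f. (\<integral>x. f x \<partial>\<mu>) - (\<integral>x. f x \<partial>\<nu>)) ` {f::'a \<Rightarrow> real. lip1 f})"
proof -
  obtain D where D: "\<forall>x::'a\<in>UNIV. dist undefined x \<le> D"
    using compact_imp_bounded[OF assms(1)] unfolding bounded_any_center[of _ undefined] by blast
  have bound: "\<bar>(\<integral>x. f x \<partial>M) - f undefined\<bar> \<le> D"
    if f: "lip1 (f::'a \<Rightarrow> real)" and M: "M \<in> probs" for f M
  proof -
    have "\<bar>f x - f undefined\<bar> \<le> D" for x
      using f D by (metis UNIV_I dist_commute lip1_def order_trans)
    then have "\<bar>(\<integral>x. f x \<partial>M) - (\<integral>x. f undefined \<partial>M)\<bar> \<le> D"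
      using M f assms(1) by (intro integral_probs_diff_le integrable_probs_continuous lip1_continuous_on lip1_const) auto
    then show ?thesis unfolding integral_probs_const[OF M] .
  qed
  show ?thesis
  proof (rule bdd_aboveI2[where M="2 * D"])
    fix f :: "'a \<Rightarrow> real" assume "f \<in> {f. lip1 f}"
    then show "(\<integral>x. f x \<partial>\<mu>) - (\<integral>x. f x \<partial>\<nu>) \<le> 2 * D"
      using bound[OF _ assms(2), of f] bound[OF _ assms(3), of f] unfolding abs_le_iff by auto
  qed
qed

lemma dMK_upper:
  assumes "compact (UNIV::'a::metric_space set)" "\<mu> \<in> probs" "\<nu> \<in> probs" "lip1 (f::'a \<Rightarrow> real)"
  shows "(\<integral>x. f x \<partial>\<mu>) - (\<integral>x. f x \<partial>\<nu>) \<le> dMK \<mu> \<nu>"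
  unfolding dMK_def using assms(4) by (intro cSUP_upper[OF _ dMK_bdd_above[OF assms(1-3)]]) simp

lemma dMK_least:
  assumes "\<And>f::'a::metric_space \<Rightarrow> real. lip1 f \<Longrightarrow> (\<integral>x. f x \<partial>\<mu>) - (\<integral>x. f x \<partial>\<nu>) \<le> C"
  shows "dMK \<mu> \<nu> \<le> C"
  unfolding dMK_def using assms lip1_const by (intro cSUP_least) auto

lemma dMK_nonneg:
  assumes "compact (UNIV::'a::metric_space set)" "\<mu> \<in> probs" "\<nu> \<in> probs"
  shows "0 \<le> dMK \<mu> (\<nu>::'a measure)"
  using dMK_upper[OF assms lip1_const[of 0]] by simp

lemma dMK_lipschitz_on:
  assumes "compact (UNIV::'a::metric_space set)" "\<mu> \<in> probs" "\<nu> \<in> probs"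
    and "C-lipschitz_on UNIV (g::'a \<Rightarrow> real)"
  shows "\<bar>(\<integral>x. g x \<partial>\<mu>) - (\<integral>x. g x \<partial>\<nu>)\<bar> \<le> C * dMK \<mu> \<nu>"
proof (cases "C = 0")
  case True
  then have "g x = g undefined" for x
    using lipschitz_onD[OF assms(4), of x undefined] by simp
  then have "(\<integral>x. g x \<partial>M) = g undefined" if "M \<in> probs" for M
    using integral_probs_const[OF that] Bochner_Integration.integral_cong[of M M g "\<lambda>_. g undefined"]
    by simp
  then show ?thesis
    using True assms(2,3) by simp
next
  case False
  then have "C > 0" using lipschitz_on_nonneg[OF assms(4)] by simp
  have "lip1 (\<lambda>x. g x / C)" "lip1 (\<lambda>x. - (g x / C))"
    using lip1_divide[OF assms(4) \<open>C > 0\<close>] lip1_uminus by blast+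
  from this[THEN dMK_upper[OF assms(1-3)]]
  have "\<bar>(\<integral>x. g x \<partial>\<mu>) / C - (\<integral>x. g x \<partial>\<nu>) / C\<bar> \<le> dMK \<mu> \<nu>"
    by (simp add: abs_le_iff)
  then show ?thesis
    using \<open>C > 0\<close> by (simp add: diff_divide_distrib[symmetric] divide_le_eq mult.commute)
qed

lemma lipschitz_on_infdist: "1-lipschitz_on UNIV (\<lambda>x::'a::metric_space. infdist x F)"
proof (rule lipschitz_onI)
  fix x y :: 'a
  show "dist (infdist x F) (infdist y F) \<le> 1 * dist x y"
    using infdist_triangle[of x F y] infdist_triangle[of y F x]
    by (simp add: dist_real_def dist_commute abs_le_iff)
qed simp

lemma probs_eqI_lip1:
  fixes \<mu> \<nu> :: "'a::metric_space measure"
  assumes \<mu>: "\<mu> \<in> probs" and \<nu>: "\<nu> \<in> probs"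
    and eq: "\<And>f. lip1 f \<Longrightarrow> (\<integral>x. f x \<partial>\<mu>) = (\<integral>x. f x \<partial>\<nu>)"
  shows "\<mu> = \<nu>"
proof -
  interpret \<mu>: prob_space \<mu> using probs_prob_space[OF \<mu>] .
  interpret \<nu>: prob_space \<nu> using probs_prob_space[OF \<nu>] .
  have measure_closed: "measure \<mu> F = measure \<nu> F" if "closed F" for F :: "'a set"
  proof (cases "F = {}")
    case False
    with \<open>closed F\<close> have F: "closed F" "F \<noteq> {}" by simp_all
    define h where "h j x = max 0 (1 - real (Suc j) * infdist x F)" for j x
    have h_lipschitz: "(real (Suc j))-lipschitz_on UNIV (h j)" for j
    proof (rule lipschitz_onI)
      fix x y
      have "dist (h j x) (h j y) \<le> \<bar>real (Suc j) * infdist x F - real (Suc j) * infdist y F\<bar>"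
        unfolding h_def dist_real_def by linarith
      also have "\<dots> = real (Suc j) * \<bar>infdist x F - infdist y F\<bar>"
        by (simp only: right_diff_distrib[symmetric] abs_mult abs_of_nat)
      also have "\<dots> \<le> real (Suc j) * dist x y"
        using lipschitz_onD[OF lipschitz_on_infdist, of x y F] by (simp add: dist_real_def)
      finally show "dist (h j x) (h j y) \<le> real (Suc j) * dist x y" .
    qed simp
    have h_eq: "(\<integral>x. h j x \<partial>\<mu>) = (\<integral>x. h j x \<partial>\<nu>)" for j
      using eq[OF lip1_divide[OF h_lipschitz]] by simp
    have lim: "(\<lambda>j. \<integral>x. h j x \<partial>M) \<longlonglongrightarrow> measure M F" if M: "M \<in> probs" for M
    proof -
      interpret prob_space M using probs_prob_space[OF M] .
      have "(\<lambda>j. h j x) \<longlonglongrightarrow> indicator F x" for x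
      proof (cases "x \<in> F")
        case False
        then have "infdist x F > 0"
          using in_closed_iff_infdist_zero[OF F] infdist_nonneg[of x F] by simp
        then obtain N :: nat where N: "1 / infdist x F < real N"
          using reals_Archimedean2 by blast
        have "h j x = 0" if "j \<ge> N" for j
        proof -
          have "1 / infdist x F < real (Suc j)" using N that by simp
          then show ?thesis
            using \<open>infdist x F > 0\<close> by (simp add: h_def divide_less_eq mult.commute)
        qed
        then have "\<forall>\<^sub>F j in sequentially. h j x = 0"
          unfolding eventually_sequentially by blast
        then show ?thesis using False by (simp add: tendsto_eventually)
      qed (simp add: h_def)
      moreover have "h j \<in> borel_measurable M" for j
        by (rule measurable_probsI[OF M borel_measurable_continuous_onI])
          (rule lipschitz_on_continuous_on[OF h_lipschitz])
      moreover have "\<bar>h j x\<bar> \<le> 1" for j x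
        using infdist_nonneg[of x F] by (simp add: h_def)
      ultimately have "(\<lambda>j. \<integral>x. h j x \<partial>M) \<longlonglongrightarrow> (\<integral>x. indicator F x \<partial>M)"
        using F by (intro integral_dominated_convergence[where w="\<lambda>_. 1"])
          (simp_all add: measurable_probsI[OF M])
      then show ?thesis using F by (simp add: sets_probs[OF M])
    qed
    show ?thesis
      using LIMSEQ_unique[OF lim[OF \<mu>]] lim[OF \<nu>] by (simp add: h_eq)
  qed simp
  show ?thesis
  proof (rule measure_eqI_generator_eq[where E="Collect closed" and \<Omega>=UNIV and A="\<lambda>_. UNIV"])
    have "sets (borel::'a measure) = sigma_sets UNIV (Collect closed)"
      by (subst borel_eq_closed) simp
    then show "sets \<mu> = sigma_sets UNIV (Collect closed)" "sets \<nu> = sigma_sets UNIV (Collect closed)"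
      using sets_probs \<mu> \<nu> by auto
  qed (auto simp: Int_stable_def \<mu>.emeasure_eq_measure \<nu>.emeasure_eq_measure
      intro: measure_closed)
qed

lemma probs_eqI_dMK:
  fixes \<mu> \<nu> :: "'a::metric_space measure"
  assumes cX: "compact (UNIV::'a set)" and \<mu>: "\<mu> \<in> probs" and \<nu>: "\<nu> \<in> probs"
    and "dMK \<mu> \<nu> \<le> 0"
  shows "\<mu> = \<nu>"
proof (rule probs_eqI_lip1[OF \<mu> \<nu>])
  fix f :: "'a \<Rightarrow> real" assume "lip1 f"
  have "(\<integral>x. f x \<partial>\<mu>) - (\<integral>x. f x \<partial>\<nu>) \<le> 0"
    using dMK_upper[OF cX \<mu> \<nu> \<open>lip1 f\<close>] \<open>dMK \<mu> \<nu> \<le> 0\<close> by linarith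
  moreover have "(\<integral>x. - f x \<partial>\<mu>) - (\<integral>x. - f x \<partial>\<nu>) \<le> 0"
    using dMK_upper[OF cX \<mu> \<nu> lip1_uminus[OF \<open>lip1 f\<close>]] \<open>dMK \<mu> \<nu> \<le> 0\<close> by linarith
  ultimately show "(\<integral>x. f x \<partial>\<mu>) = (\<integral>x. f x \<partial>\<nu>)" by simp
qed

lemma lipschitz_approximation:
  fixes f :: "'a::metric_space \<Rightarrow> real"
  assumes cX: "compact (UNIV::'a set)" and f: "continuous_on UNIV f" and "e > 0"
  obtains C g where "C-lipschitz_on UNIV g" "\<And>x. \<bar>f x - g x\<bar> \<le> e"
proof -
  obtain B where B: "\<And>x. \<bar>f x\<bar> \<le> B"
    using compact_space_bounded_real[OF cX f] by blast
  obtain d where "d > 0" and d: "\<And>x y. dist y x < d \<Longrightarrow> dist (f y) (f x) < e"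
    using compact_uniformly_continuous[OF f cX] \<open>e > 0\<close>
    unfolding uniformly_continuous_on_def by blast
  define C where "C = 2 * max B 0 / d"
  have "C \<ge> 0" using \<open>d > 0\<close> by (simp add: C_def)
  define g where "g x = (INF y. f y + C * dist x y)" for x
  have bdd: "bdd_below (range (\<lambda>y. f y + C * dist x y))" for x
    using B \<open>C \<ge> 0\<close> by (intro bdd_belowI2[where m="- B"]) (smt (verit) zero_le_dist mult_nonneg_nonneg)
  have g_le: "g x \<le> f y + C * dist x y" for x y
    unfolding g_def by (rule cINF_lower[OF bdd]) simp
  have le_g: "a \<le> g x" if "\<And>y. a \<le> f y + C * dist x y" for a x
    unfolding g_def using that by (intro cINF_greatest) auto
  have "C-lipschitz_on UNIV g"
  proof (rule lipschitz_onI)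
    have shift: "g x - C * dist x y \<le> g y" for x y
    proof (rule le_g)
      fix z
      have "g x \<le> f z + C * dist x z" by (rule g_le)
      also have "\<dots> \<le> f z + C * dist y z + C * dist x y"
        using dist_triangle[of x z y] \<open>C \<ge> 0\<close> by (simp add: mult_left_mono flip: distrib_left)
      finally show "g x - C * dist x y \<le> f z + C * dist y z" by simp
    qed
    show "dist (g x) (g y) \<le> C * dist x y" for x y
      using shift[of x y] shift[of y x] by (simp add: dist_real_def dist_commute abs_le_iff)
  qed fact
  moreover have "\<bar>f x - g x\<bar> \<le> e" for x
  proof -
    have "f x - e \<le> f y + C * dist x y" for y
    proof (cases "dist y x < d")
      case True
      then show ?thesis
        using d[of y x] \<open>C \<ge> 0\<close> by (simp add: dist_real_def abs_less_iff) (smt (verit) zero_le_dist mult_nonneg_nonneg)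
    next
      case False
      then have "C * d \<le> C * dist x y"
        using \<open>C \<ge> 0\<close> by (simp add: dist_commute mult_left_mono)
      then have "2 * max B 0 \<le> C * dist x y"
        using \<open>d > 0\<close> by (simp add: C_def)
      then show ?thesis using B[of x] B[of y] \<open>e > 0\<close> by (simp add: abs_le_iff)
    qed
    then have "f x - e \<le> g x" by (rule le_g)
    then show ?thesis using g_le[of x x] \<open>e > 0\<close> by (simp add: abs_le_iff)
  qed
  ultimately show ?thesis using that by blast
qed

lemma sums_third_powers: "(\<lambda>k. (1/3::real)^(Suc k)) sums (1/2)"
proof -
  have "(\<lambda>k. 1/3 * (1/3::real)^k) sums (1/3 * (1 / (1 - 1/3)))"
    by (intro sums_mult geometric_sums) simp
  then show ?thesis by simp
qed

locale dyadic_nets =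
  fixes P :: "nat \<Rightarrow> 'a::metric_space list"
  assumes nets_nonempty: "P k \<noteq> []"
    and nets_cover: "\<exists>i<length (P k). dist x (P k ! i) < (1/2)^k"
begin

definition weight :: "nat \<Rightarrow> real" where
  "weight k = 1 / (\<Prod>j\<le>k. 3 * real (length (P j)))"

definition digit :: "'a \<Rightarrow> nat \<Rightarrow> nat" where
  "digit x k = (LEAST i. i < length (P k) \<and> dist x (P k ! i) < (1/2)^k)"

definition code :: "'a \<Rightarrow> real" where
  "code x = (\<Sum>k. real (digit x k) * weight k)"

lemma weight_pos: "weight k > 0"
proof -
  have "length (P j) > 0" for j using nets_nonempty[of j] by simp
  then show ?thesis unfolding weight_def by (simp add: prod_pos)
qed

lemma length_weight_Suc: "real (length (P (Suc k))) * weight (Suc k) = weight k / 3"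
  using nets_nonempty[of "Suc k"] by (simp add: weight_def atMost_Suc)

lemma length_weight_0: "real (length (P 0)) * weight 0 = 1 / 3"
  using nets_nonempty[of 0] by (simp add: weight_def)

lemma weight_le_length_weight: "weight k \<le> real (length (P k)) * weight k"
  using nets_nonempty[of k] weight_pos[of k] by (simp add: Suc_le_eq)

lemma weight_geometric: "weight (k + m) \<le> weight k * (1/3)^m"
proof (induction m)
  case (Suc m)
  have "weight (k + Suc m) \<le> weight (k + m) / 3"
    using weight_le_length_weight[of "Suc (k + m)"] length_weight_Suc[of "k + m"] by simp
  also have "\<dots> \<le> weight k * (1/3)^m / 3" using Suc by simp
  finally show ?case by simp
qed simp

lemma weight_antimono: "j \<le> k \<Longrightarrow> weight k \<le> weight j"
  using weight_geometric[of j "k - j"] weight_pos[of j]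
  by (simp add: mult_left_le power_le_one order_trans)

lemma length_weight_le: "real (length (P k)) * weight k \<le> (1/3)^(Suc k)"
proof (cases k)
  case (Suc j)
  have "weight j \<le> weight 0 * (1/3)^j" using weight_geometric[of 0 j] by simp
  also have "\<dots> \<le> 1/3 * (1/3)^j"
    using weight_le_length_weight[of 0] length_weight_0 by (simp add: mult_right_mono)
  finally show ?thesis using length_weight_Suc[of j] Suc by simp
qed (simp add: length_weight_0)

lemma digit: "digit x k < length (P k)" "dist x (P k ! digit x k) < (1/2)^k"
  using LeastI_ex[OF nets_cover[of k x]] by (auto simp: digit_def)

lemma code_term_bounds: "0 \<le> real (digit x k) * weight k" "real (digit x k) * weight k \<le> (1/3)^(Suc k)"
proof -
  have "real (digit x k) * weight k \<le> real (length (P k)) * weight k"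
    using digit(1)[of x k] weight_pos[of k] by (intro mult_right_mono) auto
  then show "real (digit x k) * weight k \<le> (1/3)^(Suc k)"
    using length_weight_le[of k] by linarith
  show "0 \<le> real (digit x k) * weight k"
    using weight_pos[of k] by simp
qed

lemma summable_code: "summable (\<lambda>k. real (digit x k) * weight k)"
proof (rule summable_comparison_test'[where N=0])
  show "summable (\<lambda>k. (1/3::real)^(Suc k))" by (rule sums_summable[OF sums_third_powers])
  show "norm (real (digit x k) * weight k) \<le> (1/3)^(Suc k)" for k
    using code_term_bounds[of x k] by simp
qed

lemma code_bounds: "code x \<in> {0..1}"
proof -
  have "0 \<le> code x"
    unfolding code_def by (rule suminf_nonneg[OF summable_code]) (rule code_term_bounds)
  moreover have "code x \<le> 1/2"
    unfolding code_def sums_unique[OF sums_third_powers]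
    using code_term_bounds(2) summable_code sums_summable[OF sums_third_powers] by (rule suminf_le)
  ultimately show ?thesis by auto
qed

lemma code_first_digit_difference:
  assumes j: "digit x j \<noteq> digit y j" and less: "\<And>i. i < j \<Longrightarrow> digit x i = digit y i"
  shows "weight j / 2 \<le> \<bar>code x - code y\<bar>"
proof -
  define D where "D i = (real (digit x i) - real (digit y i)) * weight i" for i
  have sD: "summable D"
    unfolding D_def left_diff_distrib by (intro summable_diff summable_code)
  have "code x - code y = suminf D"
    unfolding code_def D_def left_diff_distrib by (rule suminf_diff[OF summable_code summable_code])
  also have "\<dots> = (\<Sum>n. D (n + j))"
    using suminf_split_initial_segment[OF sD, of j] less by (simp add: D_def)
  also have "\<dots> = D j + (\<Sum>n. D (Suc n + j))"
    using suminf_split_head[OF summable_ignore_initial_segment[OF sD, of j]] by simp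
  finally have split: "code x - code y = D j + (\<Sum>n. D (Suc n + j))" .
  have tail_term: "norm (D (Suc n + j)) \<le> weight j / 3 * (1/3)^n" for n
  proof -
    have "\<bar>real (digit x (Suc n + j)) - real (digit y (Suc n + j))\<bar> \<le> real (length (P (Suc (n + j))))"
      using digit(1)[of x "Suc n + j"] digit(1)[of y "Suc n + j"] by simp
    then have "norm (D (Suc n + j)) \<le> real (length (P (Suc (n + j)))) * weight (Suc (n + j))"
      unfolding D_def using weight_pos[of "Suc (n + j)"] by (simp add: abs_mult)
    also have "\<dots> \<le> weight j * (1/3)^n / 3"
      using length_weight_Suc[of "n + j"] weight_geometric[of j n] by (simp add: add.commute)
    finally show ?thesis by simp
  qed
  have "(\<lambda>n. weight j / 3 * (1/3::real)^n) sums (weight j / 3 * (1 / (1 - 1/3)))"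
    by (intro sums_mult geometric_sums) simp
  then have "\<bar>\<Sum>n. D (Suc n + j)\<bar> \<le> weight j / 2"
    using norm_suminf_le[of "\<lambda>n. D (Suc n + j)", OF tail_term] by (simp add: sums_iff)
  moreover have "weight j \<le> \<bar>D j\<bar>"
  proof -
    have "1 \<le> \<bar>real (digit x j) - real (digit y j)\<bar>" using j by linarith
    then show ?thesis
      unfolding D_def using weight_pos[of j] by (simp add: abs_mult mult_le_cancel_right1)
  qed
  ultimately show ?thesis using split by linarith
qed

lemma dist_less_if_code_close:
  assumes "\<bar>code x - code y\<bar> < weight k / 2"
  shows "dist x y < 2 * (1/2)^k"
proof -
  have "digit x k = digit y k"
  proof (rule ccontr)
    assume "digit x k \<noteq> digit y k"
    define j where "j = (LEAST j. digit x j \<noteq> digit y j)"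
    have "weight j / 2 \<le> \<bar>code x - code y\<bar>"
      unfolding j_def using LeastI[of "\<lambda>j. digit x j \<noteq> digit y j" k] \<open>digit x k \<noteq> digit y k\<close>
      by (intro code_first_digit_difference) (auto dest: not_less_Least)
    moreover have "weight k \<le> weight j"
      unfolding j_def using \<open>digit x k \<noteq> digit y k\<close> by (intro weight_antimono Least_le)
    ultimately show False using assms by linarith
  qed
  then show ?thesis
    using digit(2)[of x k] digit(2)[of y k] dist_triangle2[of x y "P k ! digit x k"] by simp
qed

lemma code_measurable: "code \<in> borel_measurable borel"
proof -
  have "(\<lambda>x. digit x k) \<in> measurable borel (count_space UNIV)" for k
    unfolding digit_def
  proof (rule measurable_Least)
    fix i
    have "{x. i < length (P k) \<and> dist x (P k ! i) < (1/2)^k} =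
        (if i < length (P k) then ball (P k ! i) ((1/2)^k) else {})"
      by (auto simp: dist_commute)
    then show "(\<lambda>x. i < length (P k) \<and> dist x (P k ! i) < (1/2)^k) \<in> measurable borel (count_space UNIV)"
      unfolding pred_def by simp
  qed
  then have "(\<lambda>x. \<Sum>i<n. real (digit x i) * weight i) \<in> borel_measurable borel" for n
    by (intro borel_measurable_sum borel_measurable_times measurable_compose[OF _ borel_measurable_count_space])
      simp_all
  then show ?thesis
    unfolding code_def by (rule borel_measurable_LIMSEQ_real[OF summable_LIMSEQ[OF summable_code]])
qed

end

lemma continuous_inverse_on_closure_range:
  fixes \<psi> :: "'a::metric_space \<Rightarrow> 'b::metric_space"
  assumes cX: "compact (UNIV::'a set)"
    and unif: "\<And>e. e > 0 \<Longrightarrow> \<exists>d>0. \<forall>x y. dist (\<psi> x) (\<psi> y) < d \<longrightarrow> dist x y < e"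
  obtains \<phi> where "continuous_on (closure (range \<psi>)) \<phi>" "\<And>x. \<phi> (\<psi> x) = x"
proof -
  define G where "G = closure (range (\<lambda>x. (\<psi> x, x)))"
  have G_nonempty_fibre: "\<exists>x. (u, x) \<in> G" if u: "u \<in> closure (range \<psi>)" for u
  proof -
    obtain v where v: "\<And>n. v n \<in> range \<psi>" "v \<longlonglongrightarrow> u"
      using u unfolding closure_sequential by blast
    have "\<forall>n. \<exists>z. v n = \<psi> z" using v(1) by blast
    then obtain y where y: "\<And>n. v n = \<psi> (y n)" by metis
    obtain x \<sigma> where \<sigma>: "strict_mono \<sigma>" "(y \<circ> \<sigma>) \<longlonglongrightarrow> x"
      using seq_compactE[OF compact_imp_seq_compact[OF cX], of y] by blast
    have "(\<lambda>n. (\<psi> (y (\<sigma> n)), y (\<sigma> n))) \<longlonglongrightarrow> (u, x)"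
      using LIMSEQ_subseq_LIMSEQ[OF v(2) \<sigma>(1)] \<sigma>(2) by (intro tendsto_Pair) (simp_all add: o_def y)
    then have "(u, x) \<in> G"
      unfolding G_def closure_sequential by (intro exI[of _ "\<lambda>n. (\<psi> (y (\<sigma> n)), y (\<sigma> n))"]) auto
    then show ?thesis ..
  qed
  have G_modulus: "dist x x' \<le> e"
    if G: "(u, x) \<in> G" "(u', x') \<in> G" and "dist u u' < d"
      and d: "\<forall>x y. dist (\<psi> x) (\<psi> y) < d \<longrightarrow> dist x y < e"
    for u x u' x' d e
  proof -
    let ?T = "{pq. d \<le> dist (fst (fst pq)) (fst (snd pq)) \<or> dist (snd (fst pq)) (snd (snd pq)) \<le> e}"
    have "closure (range (\<lambda>x. (\<psi> x, x)) \<times> range (\<lambda>x. (\<psi> x, x))) \<subseteq> ?T"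
    proof (rule closure_minimal)
      show "closed ?T"
        by (intro closed_Collect_disj closed_Collect_le continuous_intros)
      show "range (\<lambda>x. (\<psi> x, x)) \<times> range (\<lambda>x. (\<psi> x, x)) \<subseteq> ?T"
        using d by (force simp: not_less[symmetric])
    qed
    then have "((u, x), (u', x')) \<in> ?T"
      using G by (auto simp: closure_Times G_def)
    then show ?thesis
      using \<open>dist u u' < d\<close> by simp
  qed
  define \<phi> where "\<phi> u = (SOME x. (u, x) \<in> G)" for u
  have \<phi>_in_G: "(u, \<phi> u) \<in> G" if u: "u \<in> closure (range \<psi>)" for u
    unfolding \<phi>_def using G_nonempty_fibre[OF u] by (rule someI_ex)
  have "\<phi> (\<psi> x) = x" for x
  proof -
    have "\<psi> x \<in> closure (range \<psi>)" "(\<psi> x, x) \<in> G"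
      unfolding G_def by (auto intro: closure_subset[THEN subsetD])
    have "dist (\<phi> (\<psi> x)) x \<le> 0 + e" if e: "e > 0" for e
    proof -
      obtain d where "d > 0" "\<forall>x y. dist (\<psi> x) (\<psi> y) < d \<longrightarrow> dist x y < e"
        using unif[OF e] by blast
      then show ?thesis
        using G_modulus[OF \<phi>_in_G[OF \<open>\<psi> x \<in> _\<close>] \<open>(\<psi> x, x) \<in> G\<close>] by simp
    qed
    then have "dist (\<phi> (\<psi> x)) x \<le> 0" by (rule field_le_epsilon)
    then show ?thesis by simp
  qed
  moreover have "continuous_on (closure (range \<psi>)) \<phi>"
  proof (rule continuous_on_iff[THEN iffD2], intro ballI allI impI)
    fix u and e :: real assume u: "u \<in> closure (range \<psi>)" and "e > 0"
    then obtain d where "d > 0" and d: "\<forall>x y. dist (\<psi> x) (\<psi> y) < d \<longrightarrow> dist x y < e / 2"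
      using unif[of "e / 2"] by auto
    have "dist (\<phi> u') (\<phi> u) < e" if u': "u' \<in> closure (range \<psi>)" "dist u' u < d" for u'
      using G_modulus[OF \<phi>_in_G[OF u'(1)] \<phi>_in_G[OF u] u'(2) d] \<open>e > 0\<close> by simp
    then show "\<exists>d>0. \<forall>u'\<in>closure (range \<psi>). dist u' u < d \<longrightarrow> dist (\<phi> u') (\<phi> u) < e"
      using \<open>d > 0\<close> by blast
  qed
  ultimately show ?thesis using that by blast
qed

lemma weak_conv_m_AE_in_closed:
  assumes M: "\<And>n. real_distribution (M n)" and M': "real_distribution M'"
    and conv: "weak_conv_m M M'" and K: "closed K" "K \<noteq> {}"
    and AE: "\<And>n. AE u in M n. u \<in> K"
  shows "AE u in M'. u \<in> K"
proof -
  interpret M': real_distribution M' by (rule M')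
  define h where "h u = max 0 (1 - infdist u K)" for u
  have h_cont: "continuous_on UNIV h" unfolding h_def by (intro continuous_intros)
  have h_bound: "\<bar>h u\<bar> \<le> 1" for u unfolding h_def using infdist_nonneg[of u K] by auto
  have "(\<integral>u. h u \<partial>M n) = 1" for n
  proof -
    interpret real_distribution "M n" by (rule M)
    have "AE u in M n. h u = 1"
      using AE[of n] by eventually_elim (simp add: h_def)
    then have "(\<integral>u. h u \<partial>M n) = (\<integral>u. 1 \<partial>M n)"
      using borel_measurable_continuous_onI[OF h_cont] by (intro integral_cong_AE) simp_all
    then show ?thesis using prob_space by simp
  qed
  moreover have "isCont h u" for u
    using h_cont by (simp add: continuous_on_eq_continuous_at)
  then have "(\<lambda>n. \<integral>u. h u \<partial>M n) \<longlonglongrightarrow> (\<integral>u. h u \<partial>M')"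
    using h_bound by (intro weak_conv_imp_integral_bdd_continuous_conv[OF M M' conv, of _ 1]) simp_all
  ultimately have "(\<lambda>n. 1) \<longlonglongrightarrow> (\<integral>u. h u \<partial>M')"
    by simp
  then have "(\<integral>u. h u \<partial>M') = 1"
    by (rule LIMSEQ_unique[OF _ tendsto_const])
  moreover have h_integrable: "integrable M' h"
    using h_bound borel_measurable_continuous_onI[OF h_cont]
    by (intro M'.integrable_const_bound[where B=1]) auto
  ultimately have "(\<integral>u. 1 - h u \<partial>M') = 0"
    using M'.prob_space by simp
  then have "AE u in M'. 1 - h u = 0"
    using h_integrable h_bound by (subst integral_nonneg_eq_0_iff_AE[symmetric]) (auto simp: abs_le_iff)
  then show ?thesis
  proof (rule AE_mp, intro AE_I2 impI)
    fix u assume "1 - h u = 0"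
    then have "infdist u K = 0"
      using infdist_nonneg[of u K] by (simp add: h_def max_def split: if_splits)
    then show "u \<in> K" using in_closed_iff_infdist_zero[OF K] by simp
  qed
qed

lemma compact_space_dyadic_nets:
  assumes cX: "compact (UNIV::'a::metric_space set)"
  shows "\<exists>P. \<forall>k. P k \<noteq> [] \<and> (\<forall>x::'a. \<exists>i<length (P k). dist x (P k ! i) < (1/2::real)^k)"
proof -
  have "\<exists>L::'a list. L \<noteq> [] \<and> (\<forall>x. \<exists>i<length L. dist x (L ! i) < (1/2)^k)" for k :: nat
  proof -
    obtain K where K: "finite K" "(UNIV::'a set) \<subseteq> (\<Union>x\<in>K. ball x ((1/2)^k))"
      using seq_compact_imp_totally_bounded[OF compact_imp_seq_compact[OF cX], rule_format, of "(1/2)^k"]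
      by auto
    obtain L where L: "set L = K" using finite_list[OF K(1)] by blast
    have cover: "\<exists>i<length L. dist x (L ! i) < (1/2)^k" for x
    proof -
      have "x \<in> (\<Union>p\<in>K. ball p ((1/2)^k))" using K(2) by blast
      then obtain p where "p \<in> K" "dist p x < (1/2)^k" by auto
      then have "p \<in> set L" using L by simp
      then obtain i where "i < length L" "L ! i = p" by (auto simp: in_set_conv_nth)
      then show ?thesis using \<open>dist p x < _\<close> by (intro exI[of _ i]) (simp add: dist_commute)
    qed
    moreover have "L \<noteq> []" using cover[of undefined] by auto
    ultimately show ?thesis by blast
  qed
  then show ?thesis by (intro choice allI) blast
qed

lemma compact_space_borel_code:
  assumes cX: "compact (UNIV::'a set)"
  obtains \<psi> :: "'a::metric_space \<Rightarrow> real" where "\<psi> \<in> borel_measurable borel" "\<And>x. \<psi> x \<in> {0..1}"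
    "\<And>e. e > 0 \<Longrightarrow> \<exists>d>0. \<forall>x y. dist (\<psi> x) (\<psi> y) < d \<longrightarrow> dist x y < e"
proof -
  obtain P :: "nat \<Rightarrow> 'a list"
    where "\<forall>k. P k \<noteq> [] \<and> (\<forall>x. \<exists>i<length (P k). dist x (P k ! i) < (1/2)^k)"
    using compact_space_dyadic_nets[OF cX] by blast
  then interpret dyadic_nets P by unfold_locales auto
  show ?thesis
  proof (rule that[OF code_measurable code_bounds])
    fix e :: real assume "e > 0"
    then obtain k where "(1/2::real)^k < e / 2"
      using real_arch_pow_inv[of "e/2" "1/2::real"] by auto
    then have "dist x y < e" if "dist (code x) (code y) < weight k / 2" for x y
      using dist_less_if_code_close[of x y k] that by (simp add: dist_real_def)
    then show "\<exists>d>0. \<forall>x y. dist (code x) (code y) < d \<longrightarrow> dist x y < e"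
      using weight_pos[of k] by (intro exI[of _ "weight k / 2"]) auto
  qed
qed

lemma tight_distr_bounded:
  assumes \<mu>: "\<And>n. \<mu> n \<in> probs" and \<psi>: "\<psi> \<in> borel_measurable borel" and bounded: "\<And>x. \<psi> x \<in> {a<..b}"
  shows "tight (\<lambda>n. distr (\<mu> n) borel \<psi>)"
proof -
  have distr: "real_distribution (distr (\<mu> n) borel \<psi>) \<and> measure (distr (\<mu> n) borel \<psi>) {a<..b} = 1" for n
  proof -
    interpret prob_space "\<mu> n" using probs_prob_space[OF \<mu>] .
    have \<psi>_\<mu>: "\<psi> \<in> measurable (\<mu> n) borel" by (rule measurable_probsI[OF \<mu> \<psi>])
    have "\<psi> -` {a<..b} \<inter> space (\<mu> n) = space (\<mu> n)" using bounded by auto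
    then show ?thesis using \<psi>_\<mu> by (simp add: measure_distr prob_space)
  qed
  have "a < b" using bounded[of undefined] by simp
  show ?thesis
    unfolding tight_def
  proof (intro conjI allI impI)
    show "real_distribution (distr (\<mu> n) borel \<psi>)" for n using distr by blast
    show "\<exists>a' b'. a' < b' \<and> (\<forall>n. 1 - e < measure (distr (\<mu> n) borel \<psi>) {a'<..b'})" if "e > 0" for e
      using distr \<open>a < b\<close> \<open>e > 0\<close> by (intro exI[of _ a] exI[of _ b]) simp
  qed
qed

lemma tendsto_integral_decode:
  fixes \<psi> :: "'a::metric_space \<Rightarrow> real" and g :: "'a \<Rightarrow> real"
  assumes cX: "compact (UNIV::'a set)" and \<mu>: "\<And>n. \<mu> n \<in> probs"
    and \<psi>: "\<psi> \<in> borel_measurable borel" and K: "closed K" "\<And>x. \<psi> x \<in> K"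
    and \<phi>: "continuous_on K \<phi>" "\<phi> \<in> borel_measurable borel" "\<And>x. \<phi> (\<psi> x) = x"
    and \<nu>: "real_distribution \<nu>" and conv: "weak_conv_m (\<lambda>n. distr (\<mu> n) borel \<psi>) \<nu>"
    and AE: "AE u in \<nu>. u \<in> K" and g: "continuous_on UNIV g"
  shows "(\<lambda>n. \<integral>x. g x \<partial>\<mu> n) \<longlonglongrightarrow> (\<integral>x. g x \<partial>distr \<nu> borel \<phi>)"
proof -
  interpret \<nu>: real_distribution \<nu> by (rule \<nu>)
  have \<psi>_\<mu>: "\<psi> \<in> measurable (\<mu> n) borel" for n by (rule measurable_probsI[OF \<mu> \<psi>])
  obtain B where B: "\<And>x. \<bar>g x\<bar> \<le> B" using compact_space_bounded_real[OF cX g] by blast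
  have "0 \<le> B" using B[of undefined] by linarith
  have "continuous_on K (g \<circ> \<phi>)" by (rule continuous_on_compose[OF \<phi>(1) continuous_on_subset[OF g]]) simp
  moreover have "closedin (top_of_set UNIV) K" using K(1) by simp
  ultimately obtain G where G: "continuous_on UNIV G" "\<And>u. u \<in> K \<Longrightarrow> G u = (g \<circ> \<phi>) u"
    "\<And>u. u \<in> UNIV \<Longrightarrow> norm (G u) \<le> B"
    by (rule Tietze[OF _ _ \<open>0 \<le> B\<close>]) (simp_all add: B)
  have "(\<integral>x. g x \<partial>distr \<nu> borel \<phi>) = (\<integral>u. g (\<phi> u) \<partial>\<nu>)"
    using borel_measurable_continuous_onI[OF g] \<phi>(2) by (simp add: integral_distr)
  also have "\<dots> = (\<integral>u. G u \<partial>\<nu>)"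
  proof (rule integral_cong_AE)
    show "(\<lambda>u. g (\<phi> u)) \<in> borel_measurable \<nu>"
      using measurable_compose[OF \<phi>(2) borel_measurable_continuous_onI[OF g]] by simp
    show "G \<in> borel_measurable \<nu>"
      using borel_measurable_continuous_onI[OF G(1)] by simp
    show "AE u in \<nu>. g (\<phi> u) = G u"
      using AE by eventually_elim (simp add: G(2))
  qed
  finally have "(\<integral>x. g x \<partial>distr \<nu> borel \<phi>) = (\<integral>u. G u \<partial>\<nu>)" .
  moreover have "(\<integral>u. G u \<partial>distr (\<mu> n) borel \<psi>) = (\<integral>x. g x \<partial>\<mu> n)" for n
    using borel_measurable_continuous_onI[OF G(1)] \<psi>_\<mu> by (simp add: integral_distr G(2)[OF K(2)] \<phi>(3))
  moreover have "real_distribution (distr (\<mu> n) borel \<psi>)" for n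
    using prob_space.real_distribution_distr[OF probs_prob_space[OF \<mu>] \<psi>_\<mu>] .
  then have "(\<lambda>n. \<integral>u. G u \<partial>distr (\<mu> n) borel \<psi>) \<longlonglongrightarrow> (\<integral>u. G u \<partial>\<nu>)"
    using G by (intro weak_conv_imp_integral_bdd_continuous_conv[OF _ \<nu> conv, of _ B])
      (simp_all add: continuous_on_eq_continuous_at)
  ultimately show ?thesis by simp
qed

theorem probs_weak_convergent_subseq:
  fixes \<mu> :: "nat \<Rightarrow> 'a::metric_space measure"
  assumes cX: "compact (UNIV::'a set)" and \<mu>: "\<And>n. \<mu> n \<in> probs"
  obtains \<sigma> \<mu>' where "strict_mono \<sigma>" "\<mu>' \<in> probs"
    "\<And>g :: 'a \<Rightarrow> real. continuous_on UNIV g \<Longrightarrow> (\<lambda>k. \<integral>x. g x \<partial>\<mu> (\<sigma> k)) \<longlonglongrightarrow> (\<integral>x. g x \<partial>\<mu>')"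
proof -
  obtain \<psi> :: "'a \<Rightarrow> real" where \<psi>: "\<psi> \<in> borel_measurable borel" "\<And>x. \<psi> x \<in> {0..1}"
    and \<psi>_unif: "\<And>e. e > 0 \<Longrightarrow> \<exists>d>0. \<forall>x y. dist (\<psi> x) (\<psi> y) < d \<longrightarrow> dist x y < e"
    using compact_space_borel_code[OF cX] by blast
  define K where "K = closure (range \<psi>)"
  have K: "closed K" "K \<noteq> {}" "\<And>x. \<psi> x \<in> K"
    unfolding K_def by (auto intro: closure_subset[THEN subsetD])
  obtain \<phi>\<^sub>0 where \<phi>\<^sub>0: "continuous_on K \<phi>\<^sub>0" "\<And>x. \<phi>\<^sub>0 (\<psi> x) = x"
    using continuous_inverse_on_closure_range[OF cX \<psi>_unif] unfolding K_def by blast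
  \<comment> \<open>the limit found on the real line has no mass outside K, so the values of \<phi> there are irrelevant\<close>
  define \<phi> where "\<phi> u = (if u \<in> K then \<phi>\<^sub>0 u else undefined)" for u
  have \<phi>: "continuous_on K \<phi>" "\<phi> \<in> borel_measurable borel" "\<And>x. \<phi> (\<psi> x) = x"
  proof -
    show "continuous_on K \<phi>"
      using \<phi>\<^sub>0(1) by (rule continuous_on_eq) (simp add: \<phi>_def)
    show "\<phi> \<in> borel_measurable borel"
      unfolding \<phi>_def using K(1)
      by (intro borel_measurable_continuous_on_if \<phi>\<^sub>0(1) continuous_on_const) simp
    show "\<phi> (\<psi> x) = x" for x
      using K(3) \<phi>\<^sub>0(2) by (simp add: \<phi>_def)
  qed
  define \<nu> where "\<nu> n = distr (\<mu> n) borel \<psi>" for n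
  have "tight \<nu>"
  proof -
    have "\<psi> x \<in> {-1<..1}" for x using \<psi>(2)[of x] by auto
    then show ?thesis unfolding \<nu>_def by (rule tight_distr_bounded[OF \<mu> \<psi>(1)])
  qed
  then obtain \<sigma> \<nu>' where \<sigma>: "strict_mono \<sigma>" and \<nu>': "real_distribution \<nu>'"
    and conv: "weak_conv_m (\<nu> \<circ> \<sigma>) \<nu>'"
    using tight_imp_convergent_subsubsequence[of \<nu> id] by (auto simp: strict_mono_def)
  have "AE u in \<nu>'. u \<in> K"
  proof (rule weak_conv_m_AE_in_closed[OF _ \<nu>' conv K(1,2)])
    show "real_distribution ((\<nu> \<circ> \<sigma>) n)" for n using \<open>tight \<nu>\<close> by (simp add: tight_def)
    have "{u \<in> space borel. u \<in> K} \<in> sets borel"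
      using borel_closed[OF K(1)] by simp
    then show "AE u in (\<nu> \<circ> \<sigma>) n. u \<in> K" for n
      unfolding \<nu>_def o_def by (subst AE_distr_iff[OF measurable_probsI[OF \<mu> \<psi>(1)]]) (simp_all add: K(3))
  qed
  show ?thesis
  proof (rule that[OF \<sigma>])
    interpret \<nu>': real_distribution \<nu>' by (rule \<nu>')
    show "distr \<nu>' borel \<phi> \<in> probs"
      unfolding probs_def using \<phi>(2) by (simp add: \<nu>'.prob_space_distr)
    show "(\<lambda>k. \<integral>x. g x \<partial>\<mu> (\<sigma> k)) \<longlonglongrightarrow> (\<integral>x. g x \<partial>distr \<nu>' borel \<phi>)"
      if "continuous_on UNIV g" for g :: "'a \<Rightarrow> real"
      using conv \<open>AE u in \<nu>'. u \<in> K\<close> that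
      by (intro tendsto_integral_decode[OF cX \<mu> \<psi>(1) K(1,3) \<phi> \<nu>']) (simp_all add: \<nu>_def o_def)
  qed
qed

lemma lipschitz_on_LIMSEQ:
  assumes "\<And>n. C-lipschitz_on U (g n)" "\<And>x. x \<in> U \<Longrightarrow> (\<lambda>n. g n x) \<longlonglongrightarrow> h x"
  shows "C-lipschitz_on U h"
proof (rule lipschitz_onI)
  fix x y assume "x \<in> U" "y \<in> U"
  then have "(\<lambda>n. dist (g n x) (g n y)) \<longlonglongrightarrow> dist (h x) (h y)"
    using assms(2) by (intro tendsto_dist)
  then show "dist (h x) (h y) \<le> C * dist x y"
    using lipschitz_onD[OF assms(1) \<open>x \<in> U\<close> \<open>y \<in> U\<close>] by (intro LIMSEQ_le_const2) auto
qed (use lipschitz_on_nonneg[OF assms(1)] in simp)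

lemma lip1_multiple_approximation:
  fixes f :: "'a::metric_space \<Rightarrow> real"
  assumes "compact (UNIV::'a set)" "continuous_on UNIV f" "e > 0"
  obtains a h where "lip1 h" "\<And>y. \<bar>f y - a * h y\<bar> \<le> e"
proof -
  obtain C g where g: "C-lipschitz_on UNIV g" "\<And>y. \<bar>f y - g y\<bar> \<le> e"
    using lipschitz_approximation[OF assms] by blast
  have "C + 1 > 0" using lipschitz_on_nonneg[OF g(1)] by simp
  then have "lip1 (\<lambda>y. g y / (C + 1))" "\<And>y. (C + 1) * (g y / (C + 1)) = g y"
    using lip1_divide[OF lipschitz_on_le[OF g(1)]] by simp_all
  then show ?thesis using that g(2) by metis
qed

lemma invariant_lip1:
  "invariant \<tau> p \<mu> \<Longrightarrow> lip1 f \<Longrightarrow> (\<integral>x. f x \<partial>\<mu>) = (\<integral>x. transfer \<tau> p f x \<partial>\<mu>)"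
  unfolding invariant_def using lip1_continuous_on by blast

lemma dMK_le_if_invariant:
  fixes P Q :: "('a::metric_space \<Rightarrow> real) \<Rightarrow> 'a \<Rightarrow> real"
  assumes cX: "compact (UNIV::'a set)" and \<mu>: "\<mu> \<in> probs" and \<nu>: "\<nu> \<in> probs"
    and \<mu>_inv: "\<And>f. lip1 f \<Longrightarrow> (\<integral>x. f x \<partial>\<mu>) = (\<integral>x. P f x \<partial>\<mu>)"
    and \<nu>_inv: "\<And>f. lip1 f \<Longrightarrow> (\<integral>x. f x \<partial>\<nu>) = (\<integral>x. Q f x \<partial>\<nu>)"
    and P: "\<And>f. lip1 f \<Longrightarrow> c-lipschitz_on UNIV (P f)"
    and Q: "\<And>f. lip1 f \<Longrightarrow> continuous_on UNIV (Q f)"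
    and PQ: "\<And>f x. lip1 f \<Longrightarrow> \<bar>P f x - Q f x\<bar> \<le> \<delta>"
  shows "(1 - c) * dMK \<mu> \<nu> \<le> \<delta>"
proof -
  have "dMK \<mu> \<nu> \<le> c * dMK \<mu> \<nu> + \<delta>"
  proof (rule dMK_least)
    fix f :: "'a \<Rightarrow> real" assume f: "lip1 f"
    have "(\<integral>x. P f x \<partial>\<mu>) - (\<integral>x. P f x \<partial>\<nu>) \<le> c * dMK \<mu> \<nu>"
      using dMK_lipschitz_on[OF cX \<mu> \<nu> P[OF f]] by simp
    moreover have "\<bar>(\<integral>x. P f x \<partial>\<nu>) - (\<integral>x. Q f x \<partial>\<nu>)\<bar> \<le> \<delta>"
      using integrable_probs_continuous[OF cX \<nu> lipschitz_on_continuous_on[OF P[OF f]]]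
        integrable_probs_continuous[OF cX \<nu> Q[OF f]] PQ[OF f]
      by (rule integral_probs_diff_le[OF \<nu>])
    ultimately show "(\<integral>x. f x \<partial>\<mu>) - (\<integral>x. f x \<partial>\<nu>) \<le> c * dMK \<mu> \<nu> + \<delta>"
      using \<mu>_inv[OF f] \<nu>_inv[OF f] by linarith
  qed
  then show ?thesis by (simp add: algebra_simps)
qed

locale ifs_compact =
  fixes \<tau> :: "'l::metric_space \<Rightarrow> 'x::metric_space \<Rightarrow> 'x" and r :: real
  assumes compact_X: "compact (UNIV :: 'x set)"
    and compact_L: "compact (UNIV :: 'l set)"
    and tau_continuous: "continuous_on UNIV (\<lambda>(l, x). \<tau> l x)"
    and r_nonneg: "r \<ge> 0"
    and tau_lipschitz: "\<And>l1 l2 x. dist (\<tau> l1 x) (\<tau> l2 x) \<le> r * dist l1 l2"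
begin

lemma integrable_comp_tau:
  fixes f :: "'x \<Rightarrow> real"
  assumes "P \<in> probs" "continuous_on UNIV f"
  shows "integrable P (\<lambda>l. f (\<tau> l x))"
proof -
  have "continuous_on UNIV (\<lambda>l. \<tau> l x)"
    using continuous_on_compose2[OF tau_continuous continuous_on_Pair[OF continuous_on_id continuous_on_const]]
    by simp
  then have "continuous_on UNIV (\<lambda>l. f (\<tau> l x))"
    by (rule continuous_on_compose2[OF assms(2)]) simp
  then show ?thesis
    by (rule integrable_probs_continuous[OF compact_L assms(1)])
qed

lemma transfer_dMK_le:
  assumes "p x \<in> probs" "p' x \<in> probs" "lip1 f"
  shows "\<bar>transfer \<tau> p f x - transfer \<tau> p' f x\<bar> \<le> r * dMK (p x) (p' x)"
proof -
  have "r-lipschitz_on UNIV (\<lambda>l. f (\<tau> l x))"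
    using assms(3) tau_lipschitz r_nonneg unfolding lip1_def lipschitz_on_def dist_real_def
    by (meson order_trans)
  then show ?thesis
    unfolding transfer_def by (rule dMK_lipschitz_on[OF compact_L assms(1,2)])
qed

lemma transfer_diff_le:
  assumes "p x \<in> probs" "continuous_on UNIV f" "continuous_on UNIV g" "\<And>y. \<bar>f y - g y\<bar> \<le> e"
  shows "\<bar>transfer \<tau> p f x - transfer \<tau> p g x\<bar> \<le> e"
  unfolding transfer_def using assms
  by (intro integral_probs_diff_le integrable_comp_tau) auto

lemma transfer_lipschitz:
  assumes p: "\<And>x. p x \<in> probs" and "s \<ge> 0" "t \<ge> 0"
    and M1: "\<And>x y f. lip1 f \<Longrightarrow> (\<integral>l. \<bar>f (\<tau> l x) - f (\<tau> l y)\<bar> \<partial>p x) \<le> s * dist x y"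
    and H3: "\<And>x y. dMK (p x) (p y) \<le> t * dist x y"
    and f: "lip1 f"
  shows "(s + r * t)-lipschitz_on UNIV (transfer \<tau> p f)"
proof (rule lipschitz_onI)
  fix x y
  have f_cont: "continuous_on UNIV f" by (rule lip1_continuous_on[OF f])
  \<comment> \<open>move the point first inside the integrand, then in the measure\<close>
  have "(\<integral>l. f (\<tau> l x) \<partial>p x) - (\<integral>l. f (\<tau> l y) \<partial>p x) = (\<integral>l. f (\<tau> l x) - f (\<tau> l y) \<partial>p x)"
    by (rule Bochner_Integration.integral_diff[symmetric]) (rule integrable_comp_tau[OF p f_cont])+
  then have "\<bar>(\<integral>l. f (\<tau> l x) \<partial>p x) - (\<integral>l. f (\<tau> l y) \<partial>p x)\<bar> \<le> (\<integral>l. \<bar>f (\<tau> l x) - f (\<tau> l y)\<bar> \<partial>p x)"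
    using integral_abs_bound by metis
  also have "\<dots> \<le> s * dist x y" by (rule M1[OF f])
  finally have move_point: "\<bar>transfer \<tau> p f x - transfer \<tau> (\<lambda>_. p x) f y\<bar> \<le> s * dist x y"
    by (simp add: transfer_def)
  have "\<bar>transfer \<tau> (\<lambda>_. p x) f y - transfer \<tau> p f y\<bar> \<le> r * dMK (p x) (p y)"
    using transfer_dMK_le[of "\<lambda>_. p x" y p] p f by simp
  also have "\<dots> \<le> r * (t * dist x y)" by (rule mult_left_mono[OF H3 r_nonneg])
  finally have move_measure: "\<bar>transfer \<tau> (\<lambda>_. p x) f y - transfer \<tau> p f y\<bar> \<le> r * (t * dist x y)" .
  have "dist (transfer \<tau> p f x) (transfer \<tau> p f y) \<le> s * dist x y + r * (t * dist x y)"
    using dist_triangle[of "transfer \<tau> p f x" "transfer \<tau> (\<lambda>_. p x) f y" "transfer \<tau> p f y"]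
      move_point move_measure
    unfolding dist_real_def by linarith
  then show "dist (transfer \<tau> p f x) (transfer \<tau> p f y) \<le> (s + r * t) * dist x y"
    by (simp add: algebra_simps)
qed (use assms r_nonneg in simp)

lemma transfer_cmult: "transfer \<tau> p (\<lambda>y. a * f y) = (\<lambda>x. a * transfer \<tau> p f x)"
  by (simp add: transfer_def fun_eq_iff)

lemma transfer_continuous:
  assumes p: "\<And>x. p x \<in> probs"
    and lip: "\<And>f. lip1 f \<Longrightarrow> continuous_on UNIV (transfer \<tau> p f)"
    and f: "continuous_on UNIV f"
  shows "continuous_on UNIV (transfer \<tau> p f)"
proof (rule continuous_on_iff[THEN iffD2], intro ballI allI impI)
  fix x and e :: real assume "e > 0"
  then have "e / 3 > 0" by simp
  then obtain a h where h: "lip1 h" and approx: "\<And>y. \<bar>f y - a * h y\<bar> \<le> e / 3"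
    using lip1_multiple_approximation[OF compact_X f] by blast
  have "continuous_on UNIV (\<lambda>y. a * h y)"
    by (intro continuous_intros lip1_continuous_on h)
  then have close: "\<bar>transfer \<tau> p f z - transfer \<tau> p (\<lambda>y. a * h y) z\<bar> \<le> e / 3" for z
    by (rule transfer_diff_le[where p=p, OF p f _ approx])
  have "continuous_on UNIV (transfer \<tau> p (\<lambda>y. a * h y))"
    unfolding transfer_cmult by (intro continuous_intros lip h)
  then obtain d where "d > 0"
    and d: "\<And>x'. dist x' x < d \<Longrightarrow> dist (transfer \<tau> p (\<lambda>y. a * h y) x') (transfer \<tau> p (\<lambda>y. a * h y) x) < e / 3"
    using \<open>e / 3 > 0\<close> unfolding continuous_on_iff by blast
  have "dist (transfer \<tau> p f x') (transfer \<tau> p f x) < e" if "dist x' x < d" for x'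
    using close[of x'] close[of x] d[OF that] unfolding dist_real_def by linarith
  then show "\<exists>d>0. \<forall>x'\<in>UNIV. dist x' x < d \<longrightarrow> dist (transfer \<tau> p f x') (transfer \<tau> p f x) < e"
    using \<open>d > 0\<close> by blast
qed

lemma invariantI_lip1:
  assumes \<mu>: "\<mu> \<in> probs" and p: "\<And>x. p x \<in> probs"
    and lip: "\<And>f. lip1 f \<Longrightarrow> continuous_on UNIV (transfer \<tau> p f)"
    and inv: "\<And>f. lip1 f \<Longrightarrow> (\<integral>x. f x \<partial>\<mu>) = (\<integral>x. transfer \<tau> p f x \<partial>\<mu>)"
  shows "invariant \<tau> p \<mu>"
  unfolding invariant_def
proof (intro conjI allI impI \<mu>)
  fix f :: "'x \<Rightarrow> real" assume f: "continuous_on UNIV f"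
  have Bf: "continuous_on UNIV (transfer \<tau> p f)" by (rule transfer_continuous[OF p lip f])
  have "\<bar>(\<integral>x. f x \<partial>\<mu>) - (\<integral>x. transfer \<tau> p f x \<partial>\<mu>)\<bar> \<le> 0 + e" if "e > 0" for e
  proof -
    obtain a h where h: "lip1 h" and approx: "\<And>y. \<bar>f y - a * h y\<bar> \<le> e / 2"
      using lip1_multiple_approximation[OF compact_X f half_gt_zero[OF \<open>e > 0\<close>]] by blast
    have cont: "continuous_on UNIV (\<lambda>y. a * h y)" "continuous_on UNIV (transfer \<tau> p (\<lambda>y. a * h y))"
      unfolding transfer_cmult by (intro continuous_intros lip h lip1_continuous_on)+
    have "\<bar>(\<integral>x. f x \<partial>\<mu>) - (\<integral>x. a * h x \<partial>\<mu>)\<bar> \<le> e / 2"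
      using approx by (intro integral_probs_diff_le[OF \<mu>] integrable_probs_continuous[OF compact_X \<mu>] f cont)
    moreover have "\<bar>(\<integral>x. transfer \<tau> p f x \<partial>\<mu>) - (\<integral>x. transfer \<tau> p (\<lambda>y. a * h y) x \<partial>\<mu>)\<bar> \<le> e / 2"
      using transfer_diff_le[where p=p, OF p f cont(1) approx]
      by (intro integral_probs_diff_le[OF \<mu>] integrable_probs_continuous[OF compact_X \<mu>] Bf cont)
    moreover have "(\<integral>x. a * h x \<partial>\<mu>) = (\<integral>x. transfer \<tau> p (\<lambda>y. a * h y) x \<partial>\<mu>)"
      by (simp add: transfer_cmult inv[OF h])
    ultimately show ?thesis by linarith
  qed
  then have "\<bar>(\<integral>x. f x \<partial>\<mu>) - (\<integral>x. transfer \<tau> p f x \<partial>\<mu>)\<bar> \<le> 0"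
    by (rule field_le_epsilon)
  then show "(\<integral>x. f x \<partial>\<mu>) = (\<integral>x. transfer \<tau> p f x \<partial>\<mu>)" by simp
qed

end

locale ifs_limit = ifs_compact \<tau> r
  for \<tau> :: "'l::metric_space \<Rightarrow> 'x::metric_space \<Rightarrow> 'x" and r :: real +
  fixes q :: "nat \<Rightarrow> 'x \<Rightarrow> 'l measure" and qs :: "'x \<Rightarrow> 'l measure" and s t :: real
  assumes q_probs: "\<And>n x. q n x \<in> probs" and qs_probs: "\<And>x. qs x \<in> probs"
    and s_nonneg: "s \<ge> 0" and t_nonneg: "t \<ge> 0" and contraction: "s + r * t < 1"
    and M1: "\<And>n x y f. lip1 f \<Longrightarrow> (\<integral>l. \<bar>f (\<tau> l x) - f (\<tau> l y)\<bar> \<partial>(q n x)) \<le> s * dist x y"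
    and H3: "\<And>n x y. dMK (q n x) (q n y) \<le> t * dist x y"
    and q_uniform_limit: "\<And>\<epsilon>. \<epsilon> > 0 \<Longrightarrow> \<exists>N. \<forall>n\<ge>N. \<forall>x. dMK (q n x) (qs x) < \<epsilon>"
begin

lemma transfer_q_lipschitz: "lip1 f \<Longrightarrow> (s + r * t)-lipschitz_on UNIV (transfer \<tau> (q n) f)"
  using q_probs s_nonneg t_nonneg M1 H3 by (rule transfer_lipschitz)

lemma transfer_q_uniform_limit:
  assumes "e > 0"
  shows "\<exists>N. \<forall>n\<ge>N. \<forall>f x. lip1 f \<longrightarrow> \<bar>transfer \<tau> (q n) f x - transfer \<tau> qs f x\<bar> \<le> e"
proof -
  obtain N where N: "\<forall>n\<ge>N. \<forall>x. dMK (q n x) (qs x) < e / (r + 1)"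
    using q_uniform_limit[of "e / (r + 1)"] \<open>e > 0\<close> r_nonneg by auto
  have "\<bar>transfer \<tau> (q n) f x - transfer \<tau> qs f x\<bar> \<le> e" if "n \<ge> N" "lip1 f" for n f x
  proof -
    have "\<bar>transfer \<tau> (q n) f x - transfer \<tau> qs f x\<bar> \<le> r * dMK (q n x) (qs x)"
      by (rule transfer_dMK_le[OF q_probs qs_probs \<open>lip1 f\<close>])
    also have "\<dots> \<le> r * (e / (r + 1))"
      using N \<open>n \<ge> N\<close> r_nonneg by (intro mult_left_mono) (auto simp: less_imp_le)
    also have "\<dots> \<le> e"
      using \<open>e > 0\<close> r_nonneg by (simp add: field_simps)
    finally show ?thesis .
  qed
  then show ?thesis by blast
qed

lemma transfer_qs_lipschitz:
  assumes "lip1 f"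
  shows "(s + r * t)-lipschitz_on UNIV (transfer \<tau> qs f)"
proof (rule lipschitz_on_LIMSEQ[OF transfer_q_lipschitz[OF assms]])
  fix x
  show "(\<lambda>n. transfer \<tau> (q n) f x) \<longlonglongrightarrow> transfer \<tau> qs f x"
  proof (rule LIMSEQ_I)
    fix e :: real assume "e > 0"
    then obtain N where N: "\<forall>n\<ge>N. \<forall>f x. lip1 f \<longrightarrow> \<bar>transfer \<tau> (q n) f x - transfer \<tau> qs f x\<bar> \<le> e / 2"
      using transfer_q_uniform_limit[of "e / 2"] by auto
    have "norm (transfer \<tau> (q n) f x - transfer \<tau> qs f x) < e" if "n \<ge> N" for n
    proof -
      have "\<bar>transfer \<tau> (q n) f x - transfer \<tau> qs f x\<bar> \<le> e / 2"
        using N that assms by blast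
      then show ?thesis using \<open>e > 0\<close> by simp
    qed
    then show "\<exists>N. \<forall>n\<ge>N. norm (transfer \<tau> (q n) f x - transfer \<tau> qs f x) < e"
      by blast
  qed
qed

lemma invariant_qs_unique:
  assumes "invariant \<tau> qs \<mu>" "invariant \<tau> qs \<nu>"
  shows "\<mu> = \<nu>"
proof -
  have \<mu>: "\<mu> \<in> probs" and \<nu>: "\<nu> \<in> probs" using assms by (simp_all add: invariant_def)
  have "(1 - (s + r * t)) * dMK \<mu> \<nu> \<le> 0"
    by (rule dMK_le_if_invariant[OF compact_X \<mu> \<nu> invariant_lip1[OF assms(1)] invariant_lip1[OF assms(2)]
          transfer_qs_lipschitz lipschitz_on_continuous_on[OF transfer_qs_lipschitz]]) simp_all
  then have "dMK \<mu> \<nu> \<le> 0"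
    using contraction by (simp add: mult_le_0_iff)
  then show ?thesis by (rule probs_eqI_dMK[OF compact_X \<mu> \<nu>])
qed

lemma integral_transfer_q_tendsto:
  assumes f: "lip1 f" and M: "\<And>k. M k \<in> probs" and \<sigma>: "strict_mono \<sigma>"
  shows "(\<lambda>k. (\<integral>x. transfer \<tau> (q (\<sigma> k)) f x \<partial>M k) - (\<integral>x. transfer \<tau> qs f x \<partial>M k)) \<longlonglongrightarrow> 0"
proof (rule LIMSEQ_I)
  fix e :: real assume "e > 0"
  then obtain N where N: "\<forall>n\<ge>N. \<forall>f x. lip1 f \<longrightarrow> \<bar>transfer \<tau> (q n) f x - transfer \<tau> qs f x\<bar> \<le> e / 2"
    using transfer_q_uniform_limit[of "e / 2"] by auto
  have "\<bar>(\<integral>x. transfer \<tau> (q (\<sigma> k)) f x \<partial>M k) - (\<integral>x. transfer \<tau> qs f x \<partial>M k)\<bar> \<le> e / 2"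
    if "k \<ge> N" for k
  proof (rule integral_probs_diff_le[OF M])
    show "integrable (M k) (transfer \<tau> (q (\<sigma> k)) f)"
      by (rule integrable_probs_continuous[OF compact_X M lipschitz_on_continuous_on[OF transfer_q_lipschitz[OF f]]])
    show "integrable (M k) (transfer \<tau> qs f)"
      by (rule integrable_probs_continuous[OF compact_X M lipschitz_on_continuous_on[OF transfer_qs_lipschitz[OF f]]])
    have "\<sigma> k \<ge> N" using seq_suble[OF \<sigma>, of k] that by simp
    then show "\<bar>transfer \<tau> (q (\<sigma> k)) f x - transfer \<tau> qs f x\<bar> \<le> e / 2" for x
      using N f by blast
  qed
  then have "norm ((\<integral>x. transfer \<tau> (q (\<sigma> k)) f x \<partial>M k) - (\<integral>x. transfer \<tau> qs f x \<partial>M k) - 0) < e"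
    if "k \<ge> N" for k
    using that \<open>e > 0\<close> by fastforce
  then show "\<exists>N. \<forall>k\<ge>N. norm ((\<integral>x. transfer \<tau> (q (\<sigma> k)) f x \<partial>M k) - (\<integral>x. transfer \<tau> qs f x \<partial>M k) - 0) < e"
    by blast
qed

lemma invariant_qs_exists:
  assumes \<mu>_inv: "\<And>n. invariant \<tau> (q n) (\<mu> n)"
  obtains \<mu>s where "invariant \<tau> qs \<mu>s"
proof -
  have \<mu>: "\<mu> n \<in> probs" for n using \<mu>_inv by (simp add: invariant_def)
  obtain \<sigma> \<mu>s where \<sigma>: "strict_mono \<sigma>" and \<mu>s: "\<mu>s \<in> probs"
    and conv: "\<And>g::'x \<Rightarrow> real. continuous_on UNIV g \<Longrightarrow> (\<lambda>k. \<integral>x. g x \<partial>\<mu> (\<sigma> k)) \<longlonglongrightarrow> (\<integral>x. g x \<partial>\<mu>s)"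
    by (rule probs_weak_convergent_subseq[where \<mu>=\<mu>, OF compact_X \<mu>]) blast
  have qs_cont: "continuous_on UNIV (transfer \<tau> qs f)" if "lip1 f" for f
    using transfer_qs_lipschitz[OF that] by (rule lipschitz_on_continuous_on)
  have "(\<integral>x. f x \<partial>\<mu>s) = (\<integral>x. transfer \<tau> qs f x \<partial>\<mu>s)" if f: "lip1 f" for f
  proof -
    have "(\<lambda>k. (\<integral>x. f x \<partial>\<mu> (\<sigma> k)) - (\<integral>x. transfer \<tau> qs f x \<partial>\<mu> (\<sigma> k))) \<longlonglongrightarrow> 0"
      using integral_transfer_q_tendsto[OF f \<mu> \<sigma>] by (simp add: invariant_lip1[OF \<mu>_inv f])
    moreover have "(\<lambda>k. (\<integral>x. f x \<partial>\<mu> (\<sigma> k)) - (\<integral>x. transfer \<tau> qs f x \<partial>\<mu> (\<sigma> k)))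
        \<longlonglongrightarrow> (\<integral>x. f x \<partial>\<mu>s) - (\<integral>x. transfer \<tau> qs f x \<partial>\<mu>s)"
      by (intro tendsto_diff conv lip1_continuous_on f qs_cont)
    ultimately show ?thesis
      using LIMSEQ_unique by fastforce
  qed
  with \<mu>s qs_probs qs_cont have "invariant \<tau> qs \<mu>s"
    by (rule invariantI_lip1)
  then show ?thesis by (rule that)
qed

lemma invariant_q_tendsto:
  assumes \<mu>_inv: "\<And>n. invariant \<tau> (q n) (\<mu> n)" and \<mu>s_inv: "invariant \<tau> qs \<mu>s"
  shows "(\<lambda>n. dMK (\<mu> n) \<mu>s) \<longlonglongrightarrow> 0"
proof (rule LIMSEQ_I)
  fix e :: real assume "e > 0"
  have \<mu>: "\<mu> n \<in> probs" for n using \<mu>_inv by (simp add: invariant_def)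
  have \<mu>s: "\<mu>s \<in> probs" using \<mu>s_inv by (simp add: invariant_def)
  have "1 - (s + r * t) > 0" using contraction by simp
  then have "(1 - (s + r * t)) * (e / 2) > 0" using \<open>e > 0\<close> by simp
  then obtain N where N: "\<forall>n\<ge>N. \<forall>f x. lip1 f \<longrightarrow>
      \<bar>transfer \<tau> (q n) f x - transfer \<tau> qs f x\<bar> \<le> (1 - (s + r * t)) * (e / 2)"
    using transfer_q_uniform_limit by blast
  have "dMK (\<mu> n) \<mu>s < e" if n: "n \<ge> N" for n
  proof -
    have bound: "\<bar>transfer \<tau> (q n) f x - transfer \<tau> qs f x\<bar> \<le> (1 - (s + r * t)) * (e / 2)"
      if "lip1 f" for f x
      using N n that by blast
    have "(1 - (s + r * t)) * dMK (\<mu> n) \<mu>s \<le> (1 - (s + r * t)) * (e / 2)"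
      by (rule dMK_le_if_invariant[OF compact_X \<mu> \<mu>s invariant_lip1[OF \<mu>_inv] invariant_lip1[OF \<mu>s_inv]
            transfer_q_lipschitz lipschitz_on_continuous_on[OF transfer_qs_lipschitz] bound])
    then have "dMK (\<mu> n) \<mu>s \<le> e / 2"
      using \<open>1 - (s + r * t) > 0\<close> by simp
    then show ?thesis using \<open>e > 0\<close> by simp
  qed
  then show "\<exists>N. \<forall>n\<ge>N. norm (dMK (\<mu> n) \<mu>s - 0) < e"
    using dMK_nonneg[OF compact_X \<mu> \<mu>s] by (intro exI[of _ N]) simp
qed

end

theorem mainTheorem2:
  fixes \<tau> :: "'l::metric_space \<Rightarrow> 'x::metric_space \<Rightarrow> 'x"
    and q :: "nat \<Rightarrow> 'x \<Rightarrow> 'l measure"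
    and qs :: "'x \<Rightarrow> 'l measure"
    and \<mu> :: "nat \<Rightarrow> 'x measure"
    and s r t :: real
  assumes cX: "compact (UNIV :: 'x set)"
    and cL: "compact (UNIV :: 'l set)"
    and tau_cont: "continuous_on UNIV (\<lambda>(l, x). \<tau> l x)"
    and q_prob: "\<And>n x. q n x \<in> probs"
    and q_cont: "\<And>n. weak_continuous (q n)"
    and s_pos: "s > 0" and r_nn: "r \<ge> 0" and t_nn: "t \<ge> 0" and srt: "s + r * t < 1"
    and M1: "\<And>n x y f. lip1 f \<Longrightarrow>
               (\<integral>l. \<bar>f (\<tau> l x) - f (\<tau> l y)\<bar> \<partial>(q n x)) \<le> s * dist x y"
    and H2: "\<And>l1 l2 x. dist (\<tau> l1 x) (\<tau> l2 x) \<le> r * dist l1 l2"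
    and H3: "\<And>n x y. dMK (q n x) (q n y) \<le> t * dist x y"
    and mu_inv: "\<And>n. invariant \<tau> (q n) (\<mu> n)"
    and qs_prob: "\<And>x. qs x \<in> probs"
    and unif: "\<And>\<epsilon>. \<epsilon> > 0 \<Longrightarrow> \<exists>N. \<forall>n\<ge>N. \<forall>x. dMK (q n x) (qs x) < \<epsilon>"
  shows "\<exists>\<mu>s. invariant \<tau> qs \<mu>s \<and> (\<forall>\<nu>. invariant \<tau> qs \<nu> \<longrightarrow> \<nu> = \<mu>s)
             \<and> (\<lambda>n. dMK (\<mu> n) \<mu>s) \<longlonglongrightarrow> 0"
proof -
  interpret ifs_limit \<tau> r q qs s t
    using cX cL tau_cont r_nn H2 q_prob qs_prob s_pos t_nn srt M1 H3 unif
    by unfold_locales auto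
  obtain \<mu>s where "invariant \<tau> qs \<mu>s"
    using invariant_qs_exists[OF mu_inv] by blast
  then show ?thesis
    using invariant_qs_unique invariant_q_tendsto[OF mu_inv] by blast
qed

end
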